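(* For every $n\ge1$, the itinerary map $\iota$ is a well-defined map $\mathcal{T}_n\to\mathcal{U}_n$, and it is injective.
   Context: $\Gamma=\{0,1,2,3\}$. A word $w$ is primitive if it is not $v^m$ with $v$ nonempty and $m\ge2$; $\mathcal{U}_n$ is the set of primitive words $w\in\Gamma^n$ with $w\notin\{1,2\}^n$. $C=\{(a,b,c)\in\mathbb{R}^3: a\ge b\ge c>0,\ a+b+c=1\}$, $C^*=\{(a,b,c)\in C: a\ne1/2\}$. Regions of $C^*$: $R_0=\{a<1/2\}$, $R_1=\{2a-1\ge2b,\ a>1/2\}$, $R_2=\{2b>2a-1\ge2c,\ a>1/2\}$, $R_3=\{2c>2a-1,\ a>1/2\}$. Sorted pedal map $P:C^*\to C$: $P(a,b,c)=(1-2c,1-2b,1-2a)$ on $R_0$, $(2a-1,2b,2c)$ on $R_1$, $(2b,2a-1,2c)$ on $R_2$, $(2b,2c,2a-1)$ on $R_3$. $\mathcal{T}_n=\{p\in C: P^j(p)\text{ defined for }0\le j<n,\ P^n(p)=p,\ P^d(p)\ne p\text{ for }1\le d<n\}$. The itinerary $\iota(p)=w_0\cdots w_{n-1}\in\Gamma^n$ of $p\in\mathcal{T}_n$ is defined by $P^j(p)\in R_{w_j}$ for $0\le j<n$. *)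

theory Defs
  imports Complex_Main
begin

definition primitive :: "nat list \<Rightarrow> bool" where
  "primitive w \<longleftrightarrow> \<not> (\<exists>v m. v \<noteq> [] \<and> m \<ge> 2 \<and> w = concat (replicate m v))"

definition Uset :: "nat \<Rightarrow> nat list set" where
  "Uset n = {w. length w = n \<and> set w \<subseteq> {0,1,2,3} \<and> primitive w \<and> \<not> set w \<subseteq> {1,2}}"

definition Cset :: "(real \<times> real \<times> real) set" where
  "Cset = {(a,b,c). a \<ge> b \<and> b \<ge> c \<and> c > 0 \<and> a + b + c = 1}"

definition Cstar :: "(real \<times> real \<times> real) set" where
  "Cstar = {(a,b,c). (a,b,c) \<in> Cset \<and> a \<noteq> 1/2}"

definition Region :: "nat \<Rightarrow> (real \<times> real \<times> real) set" where
  "Region k = {(a,b,c). (a,b,c) \<in> Cstar \<and>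
      ((k = 0 \<and> a < 1/2) \<or>
       (k = 1 \<and> 2*a - 1 \<ge> 2*b \<and> a > 1/2) \<or>
       (k = 2 \<and> 2*b > 2*a - 1 \<and> 2*a - 1 \<ge> 2*c \<and> a > 1/2) \<or>
       (k = 3 \<and> 2*c > 2*a - 1 \<and> a > 1/2))}"

text \<open>Sorted pedal map; only its values on Cstar are meaningful.\<close>
definition pedal :: "real \<times> real \<times> real \<Rightarrow> real \<times> real \<times> real" where
  "pedal = (\<lambda>(a,b,c).
     if a < 1/2 then (1 - 2*c, 1 - 2*b, 1 - 2*a)
     else if 2*a - 1 \<ge> 2*b then (2*a - 1, 2*b, 2*c)
     else if 2*a - 1 \<ge> 2*c then (2*b, 2*a - 1, 2*c)
     else (2*b, 2*c, 2*a - 1))"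

definition Tset :: "nat \<Rightarrow> (real \<times> real \<times> real) set" where
  "Tset n = {p. p \<in> Cset \<and> (\<forall>j<n. (pedal ^^ j) p \<in> Cstar) \<and> (pedal ^^ n) p = p
              \<and> (\<forall>d. 1 \<le> d \<and> d < n \<longrightarrow> (pedal ^^ d) p \<noteq> p)}"

definition itinerary :: "nat \<Rightarrow> real \<times> real \<times> real \<Rightarrow> nat list" where
  "itinerary n p = (THE w. length w = n \<and> (\<forall>j<n. (pedal ^^ j) p \<in> Region (w ! j)))"

end

theory Submission
  imports Defs "HOL-Analysis.Product_Vector"
begin

text \<open>
  On each region the sorted pedal map is affine, with linear part twice a permutation
  (up to sign) of the coordinates, so it doubles Euclidean distances between points of
  the same region. Two \<open>n\<close>-periodic points with the same itinerary therefore satisfy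
  \<open>d = 2\<^sup>n d\<close> for their distance \<open>d\<close>, hence coincide: the itinerary is injective.
  A point whose itinerary is a proper power \<open>v\<^sup>m\<close> has the same itinerary as its image
  under \<open>P\<^bsup>|v|\<^esup>\<close>, contradicting minimality of the period; and on the regions 1 and 2
  the map doubles the smallest coordinate \<open>c > 0\<close>, so no periodic itinerary lies in
  \<open>{1,2}\<^sup>n\<close>.
\<close>

lemma Region_index_le: "x \<in> Region k \<Longrightarrow> k \<le> 3"
  by (cases x) (auto simp: Region_def)

lemma Region_unique: "x \<in> Region k \<Longrightarrow> x \<in> Region l \<Longrightarrow> k = l"
  by (cases x) (auto simp: Region_def Cstar_def Cset_def)

lemma Cstar_covered_by_Region: "x \<in> Cstar \<Longrightarrow> \<exists>k. x \<in> Region k"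
proof -
  assume "x \<in> Cstar"
  then have "x \<in> Region 0 \<or> x \<in> Region 1 \<or> x \<in> Region 2 \<or> x \<in> Region 3"
    by (cases x) (auto simp: Region_def Cstar_def Cset_def)
  then show ?thesis by blast
qed

lemma ex1_itinerary:
  assumes "\<forall>j<n. (pedal ^^ j) p \<in> Cstar"
  shows "\<exists>!w. length w = n \<and> (\<forall>j<n. (pedal ^^ j) p \<in> Region (w ! j))"
proof (rule ex_ex1I)
  have "\<forall>j<n. \<exists>k. (pedal ^^ j) p \<in> Region k"
    using assms Cstar_covered_by_Region by blast
  then obtain r where "\<forall>j<n. (pedal ^^ j) p \<in> Region (r j)"
    by (metis (mono_tags))
  then show "\<exists>w. length w = n \<and> (\<forall>j<n. (pedal ^^ j) p \<in> Region (w ! j))"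
    by (intro exI[of _ "map r [0..<n]"]) simp
next
  fix w w'
  assume "length w = n \<and> (\<forall>j<n. (pedal ^^ j) p \<in> Region (w ! j))"
    and "length w' = n \<and> (\<forall>j<n. (pedal ^^ j) p \<in> Region (w' ! j))"
  then show "w = w'"
    by (intro nth_equalityI) (auto intro: Region_unique)
qed

lemma
  assumes "\<forall>j<n. (pedal ^^ j) p \<in> Cstar"
  shows length_itinerary: "length (itinerary n p) = n"
    and funpow_pedal_in_Region_itinerary:
      "j < n \<Longrightarrow> (pedal ^^ j) p \<in> Region (itinerary n p ! j)"
  using theI'[OF ex1_itinerary[OF assms]] by (simp_all add: itinerary_def)

lemma dist_triple:
  "dist (a, b, c) (a', b', c') = sqrt ((a - a')\<^sup>2 + (b - b')\<^sup>2 + (c - c')\<^sup>2)"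
  for a b c a' b' c' :: real
  by (simp add: dist_Pair_Pair dist_real_def add.assoc)

lemma dist_pedal_same_Region:
  assumes x: "x \<in> Region k" and y: "y \<in> Region k"
  shows "dist (pedal x) (pedal y) = 2 * dist x y"
proof -
  obtain a b c a' b' c' where xy: "x = (a, b, c)" "y = (a', b', c')"
    by (cases x; cases y)
  have "k \<le> 3" using x by (rule Region_index_le)
  then consider "k = 0" | "k = 1" | "k = 2" | "k = 3" by linarith
  then have "dist (pedal x) (pedal y) = sqrt ((2 * (a - a'))\<^sup>2 + (2 * (b - b'))\<^sup>2 + (2 * (c - c'))\<^sup>2)"
  proof cases
    case 1
    with x y show ?thesis
      by (auto simp: xy Region_def pedal_def dist_triple power2_commute algebra_simps)
  next
    case 2
    with x y show ?thesis
      by (auto simp: xy Region_def pedal_def dist_triple power2_commute algebra_simps)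
  next
    case 3
    with x y show ?thesis
      by (auto simp: xy Region_def pedal_def dist_triple power2_commute algebra_simps)
  next
    case 4
    \<comment> \<open>\<open>pedal\<close> tests \<open>2a - 1 \<ge> 2b\<close> first; region 3 excludes this only because \<open>c \<le> b\<close>\<close>
    with x y show ?thesis
      by (auto simp: xy Region_def Cstar_def Cset_def pedal_def dist_triple power2_commute
          algebra_simps)
  qed
  also have "\<dots> = sqrt (2\<^sup>2 * ((a - a')\<^sup>2 + (b - b')\<^sup>2 + (c - c')\<^sup>2))"
    by (rule arg_cong[where f = sqrt]) algebra
  finally show ?thesis
    by (simp only: real_sqrt_mult xy dist_triple) simp
qed

lemma dist_funpow_pedal:
  assumes "\<And>j. j < m \<Longrightarrow> \<exists>k. (pedal ^^ j) p \<in> Region k \<and> (pedal ^^ j) q \<in> Region k"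
  shows "dist ((pedal ^^ m) p) ((pedal ^^ m) q) = 2 ^ m * dist p q"
  using assms
proof (induction m)
  case (Suc m)
  then obtain k where "(pedal ^^ m) p \<in> Region k" "(pedal ^^ m) q \<in> Region k"
    by blast
  then show ?case
    using Suc by (simp add: dist_pedal_same_Region)
qed simp

lemma eq_zero_if_eq_pow2_mult:
  fixes x :: real
  assumes "n \<ge> 1" and "x = 2 ^ n * x"
  shows "x = 0"
proof -
  have "(2::real) ^ n > 1"
    using assms(1) by simp
  with assms(2) show ?thesis
    by simp
qed

lemma periodic_points_eq_if_same_Regions:
  assumes "n \<ge> 1" and "(pedal ^^ n) p = p" and "(pedal ^^ n) q = q"
    and "\<And>j. j < n \<Longrightarrow> \<exists>k. (pedal ^^ j) p \<in> Region k \<and> (pedal ^^ j) q \<in> Region k"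
  shows "p = q"
proof -
  have "dist p q = 2 ^ n * dist p q"
    using dist_funpow_pedal[of n p q] assms(2-4) by simp
  then have "dist p q = 0"
    by (rule eq_zero_if_eq_pow2_mult[OF assms(1)])
  then show ?thesis by simp
qed

lemma inj_on_itinerary:
  assumes "n \<ge> 1"
  shows "inj_on (itinerary n) (Tset n)"
proof (rule inj_onI)
  fix p q
  assume "p \<in> Tset n" and "q \<in> Tset n" and same: "itinerary n p = itinerary n q"
  then have p: "(pedal ^^ n) p = p" "\<forall>j<n. (pedal ^^ j) p \<in> Cstar"
    and q: "(pedal ^^ n) q = q" "\<forall>j<n. (pedal ^^ j) q \<in> Cstar"
    by (simp_all add: Tset_def)
  show "p = q"
  proof (rule periodic_points_eq_if_same_Regions[OF assms p(1) q(1)])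
    show "\<exists>k. (pedal ^^ j) p \<in> Region k \<and> (pedal ^^ j) q \<in> Region k" if "j < n" for j
      using funpow_pedal_in_Region_itinerary[OF p(2) that] funpow_pedal_in_Region_itinerary[OF q(2) that]
      unfolding same by blast
  qed
qed

lemma third_pedal_Region_1_2:
  "x \<in> Region k \<Longrightarrow> k \<in> {1, 2} \<Longrightarrow> snd (snd (pedal x)) = 2 * snd (snd x)"
  by (cases x) (auto simp: Region_def pedal_def)

lemma third_funpow_pedal_Region_1_2:
  assumes "\<And>j. j < m \<Longrightarrow> \<exists>k\<in>{1, 2}. (pedal ^^ j) p \<in> Region k"
  shows "snd (snd ((pedal ^^ m) p)) = 2 ^ m * snd (snd p)"
  using assms
proof (induction m)
  case (Suc m)
  then obtain k where "k \<in> {1, 2}" "(pedal ^^ m) p \<in> Region k"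
    by blast
  then show ?case
    using Suc by (simp add: third_pedal_Region_1_2)
qed simp

lemma periodic_orbit_leaves_Region_1_2:
  assumes "n \<ge> 1" and "p \<in> Cset" and "(pedal ^^ n) p = p"
  shows "\<not> (\<forall>j<n. \<exists>k\<in>{1, 2}. (pedal ^^ j) p \<in> Region k)"
proof
  assume "\<forall>j<n. \<exists>k\<in>{1, 2}. (pedal ^^ j) p \<in> Region k"
  then have "snd (snd p) = 2 ^ n * snd (snd p)"
    using third_funpow_pedal_Region_1_2[of n p] assms(3) by simp
  then have "snd (snd p) = 0"
    by (rule eq_zero_if_eq_pow2_mult[OF assms(1)])
  moreover have "snd (snd p) > 0"
    using assms(2) by (auto simp: Cset_def)
  ultimately show False by simp
qed

lemma rotate_length_concat_replicate:
  "rotate (length v) (concat (replicate m v)) = concat (replicate m v)"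
proof (cases m)
  case (Suc m')
  have "rotate (length v) (v @ concat (replicate m' v)) = concat (replicate m' v) @ v"
    by (rule rotate_append)
  also have "\<dots> = concat (replicate m' v @ [v])"
    by simp
  finally show ?thesis
    using Suc by (simp add: replicate_append_same)
qed simp

lemma funpow_pedal_in_Region_rotate:
  assumes "(pedal ^^ n) p = p" and "length w = n"
    and "\<And>j. j < n \<Longrightarrow> (pedal ^^ j) p \<in> Region (w ! j)" and "j < n"
  shows "(pedal ^^ j) ((pedal ^^ d) p) \<in> Region (rotate d w ! j)"
proof -
  have "(pedal ^^ j) ((pedal ^^ d) p) = (pedal ^^ (j + d)) p"
    by (simp add: funpow_add)
  also have "\<dots> = (pedal ^^ ((j + d) mod n)) p"
    using funpow_mod_eq[OF assms(1)] by simp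
  also have "\<dots> \<in> Region (w ! ((j + d) mod n))"
    using assms(3,4) by simp
  finally show ?thesis
    using assms(2,4) by (simp add: nth_rotate add.commute)
qed

lemma primitive_periodic_itinerary:
  assumes "n \<ge> 1" and per: "(pedal ^^ n) p = p"
    and minimal: "\<And>d. 1 \<le> d \<Longrightarrow> d < n \<Longrightarrow> (pedal ^^ d) p \<noteq> p"
    and len: "length w = n" and regions: "\<And>j. j < n \<Longrightarrow> (pedal ^^ j) p \<in> Region (w ! j)"
  shows "primitive w"
  unfolding primitive_def
proof
  assume "\<exists>v m. v \<noteq> [] \<and> m \<ge> 2 \<and> w = concat (replicate m v)"
  then obtain v m where v: "v \<noteq> []" "m \<ge> 2" "w = concat (replicate m v)"
    by blast
  define d where "d = length v"
  have "d \<ge> 1"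
    using v(1) by (simp add: d_def Suc_le_eq)
  moreover have "n = m * d"
    using len v(3) by (simp add: d_def length_concat sum_list_replicate)
  moreover have "2 * d \<le> m * d"
    using v(2) by simp
  ultimately have d: "1 \<le> d" "d < n"
    by linarith+
  have "rotate d w = w"
    using v(3) by (simp add: d_def rotate_length_concat_replicate)
  then have "\<And>j. j < n \<Longrightarrow> (pedal ^^ j) ((pedal ^^ d) p) \<in> Region (w ! j)"
    using funpow_pedal_in_Region_rotate[OF per len regions] by metis
  moreover have "(pedal ^^ n) ((pedal ^^ d) p) = (pedal ^^ d) p"
    using per by (metis funpow_add add.commute comp_apply)
  ultimately have "(pedal ^^ d) p = p"
    using periodic_points_eq_if_same_Regions[OF assms(1) _ per] regions by blast
  with minimal d show False by blast
qed

lemma itinerary_in_Uset: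
  assumes "n \<ge> 1" and "p \<in> Tset n"
  shows "itinerary n p \<in> Uset n"
proof -
  have p: "p \<in> Cset" "\<forall>j<n. (pedal ^^ j) p \<in> Cstar" "(pedal ^^ n) p = p"
    and minimal: "\<And>d. 1 \<le> d \<Longrightarrow> d < n \<Longrightarrow> (pedal ^^ d) p \<noteq> p"
    using assms(2) by (simp_all add: Tset_def)
  note len = length_itinerary[OF p(2)]
  note regions = funpow_pedal_in_Region_itinerary[OF p(2)]
  have "set (itinerary n p) \<subseteq> {0, 1, 2, 3}"
  proof
    fix k assume "k \<in> set (itinerary n p)"
    then obtain j where "j < n" "k = itinerary n p ! j"
      by (auto simp: in_set_conv_nth len)
    then have "k \<le> 3"
      using regions Region_index_le by blast
    then show "k \<in> {0, 1, 2, 3}" by auto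
  qed
  moreover have "\<not> set (itinerary n p) \<subseteq> {1, 2}"
  proof
    assume "set (itinerary n p) \<subseteq> {1, 2}"
    then have "\<forall>j<n. \<exists>k\<in>{1, 2}. (pedal ^^ j) p \<in> Region k"
      by (metis len regions nth_mem subsetD)
    with periodic_orbit_leaves_Region_1_2[OF assms(1) p(1,3)] show False ..
  qed
  moreover have "primitive (itinerary n p)"
    by (rule primitive_periodic_itinerary[OF assms(1) p(3) minimal len regions])
  ultimately show ?thesis
    using len by (simp add: Uset_def)
qed

theorem mainTheorem8:
  fixes n :: nat
  assumes "n \<ge> 1"
  shows "(\<forall>p \<in> Tset n.
            (\<exists>!w. length w = n \<and> (\<forall>j<n. (pedal ^^ j) p \<in> Region (w ! j)))
            \<and> itinerary n p \<in> Uset n)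
         \<and> inj_on (itinerary n) (Tset n)"
proof -
  have "\<exists>!w. length w = n \<and> (\<forall>j<n. (pedal ^^ j) p \<in> Region (w ! j))" if "p \<in> Tset n" for p
    using that by (intro ex1_itinerary) (simp add: Tset_def)
  then show ?thesis
    using itinerary_in_Uset[OF assms] inj_on_itinerary[OF assms] by blast
qed

end
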